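(* Let $G$ be a vertex-transitive graph and let $\{W_v\}_{v\in V(G)}$ be subspaces of $\mathbb{C}^d$ such that distinct non-adjacent vertices receive orthogonal subspaces. Then $\sum_{v\in V(G)}\dim W_v\le \dfrac{d\cdot|V(G)|}{\overline{\xi_f}(G)}$.
   Context: For a graph $G$, the complement of the projective rank $\overline{\xi_f}(G)$ is the infimum of $d/r$ over all $d,r\in\mathbb{N}$ for which there is an assignment of $r$-dimensional subspaces $W_v\le\mathbb{C}^d$ to the vertices $v$ of $G$ such that distinct non-adjacent vertices receive orthogonal subspaces. *)

theory Defs
  imports Complex_Main "HOL-Library.Function_Algebras"
begin

text \<open>Vectors of \<open>\<complex>^d\<close> are represented as functions \<open>nat \<Rightarrow> complex\<close> vanishing
  outside \<open>{..<d}\<close>; complex scalar multiplication is pointwise.\<close>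

definition cscale :: "complex \<Rightarrow> (nat \<Rightarrow> complex) \<Rightarrow> (nat \<Rightarrow> complex)" where
  "cscale c v = (\<lambda>i. c * v i)"

definition cvecs :: "nat \<Rightarrow> (nat \<Rightarrow> complex) set" where
  "cvecs d = {v. \<forall>i\<ge>d. v i = 0}"

definition csubspace_of :: "nat \<Rightarrow> (nat \<Rightarrow> complex) set \<Rightarrow> bool" where
  "csubspace_of d W \<longleftrightarrow> module.subspace cscale W \<and> W \<subseteq> cvecs d"

definition cdim :: "(nat \<Rightarrow> complex) set \<Rightarrow> nat" where
  "cdim W = vector_space.dim cscale W"

definition cinner :: "nat \<Rightarrow> (nat \<Rightarrow> complex) \<Rightarrow> (nat \<Rightarrow> complex) \<Rightarrow> complex" where
  "cinner d u w = (\<Sum>i<d. u i * cnj (w i))"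

definition orth_subspaces :: "nat \<Rightarrow> (nat \<Rightarrow> complex) set \<Rightarrow> (nat \<Rightarrow> complex) set \<Rightarrow> bool" where
  "orth_subspaces d U W \<longleftrightarrow> (\<forall>x\<in>U. \<forall>y\<in>W. cinner d x y = 0)"

definition simple_graph :: "'a set \<Rightarrow> ('a \<Rightarrow> 'a \<Rightarrow> bool) \<Rightarrow> bool" where
  "simple_graph V E \<longleftrightarrow> finite V \<and> (\<forall>u\<in>V. \<forall>v\<in>V. E u v \<longleftrightarrow> E v u) \<and> (\<forall>v\<in>V. \<not> E v v)"

definition graph_automorphism :: "'a set \<Rightarrow> ('a \<Rightarrow> 'a \<Rightarrow> bool) \<Rightarrow> ('a \<Rightarrow> 'a) \<Rightarrow> bool" where
  "graph_automorphism V E \<sigma> \<longleftrightarrow> bij_betw \<sigma> V V \<and> (\<forall>u\<in>V. \<forall>v\<in>V. E (\<sigma> u) (\<sigma> v) \<longleftrightarrow> E u v)"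

definition vertex_transitive :: "'a set \<Rightarrow> ('a \<Rightarrow> 'a \<Rightarrow> bool) \<Rightarrow> bool" where
  "vertex_transitive V E \<longleftrightarrow> (\<forall>u\<in>V. \<forall>v\<in>V. \<exists>\<sigma>. graph_automorphism V E \<sigma> \<and> \<sigma> u = v)"

definition compl_orth_rep :: "'a set \<Rightarrow> ('a \<Rightarrow> 'a \<Rightarrow> bool) \<Rightarrow> nat \<Rightarrow> ('a \<Rightarrow> (nat \<Rightarrow> complex) set) \<Rightarrow> bool" where
  "compl_orth_rep V E d W \<longleftrightarrow>
     (\<forall>v\<in>V. csubspace_of d (W v)) \<and>
     (\<forall>u\<in>V. \<forall>v\<in>V. u \<noteq> v \<and> \<not> E u v \<longrightarrow> orth_subspaces d (W u) (W v))"

definition compl_proj_rank :: "'a set \<Rightarrow> ('a \<Rightarrow> 'a \<Rightarrow> bool) \<Rightarrow> real" where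
  "compl_proj_rank V E = Inf {real d / real r | d r. d \<ge> 1 \<and> r \<ge> 1 \<and>
      (\<exists>W. compl_orth_rep V E d W \<and> (\<forall>v\<in>V. cdim (W v) = r))}"

end

theory Submission
  imports Defs "HOL-Library.FuncSet"
begin

text \<open>Symmetrize over the automorphism group \<open>A\<close>: placing the representations
  \<open>W \<circ> \<sigma>\<close>, \<open>\<sigma> \<in> A\<close>, as orthogonal blocks of \<open>\<complex>^(d |A|)\<close> gives again a
  representation of the complement, and by vertex-transitivity every vertex now receives a
  subspace of the same dimension \<open>r = \<Sum>\<sigma>\<in>A. dim W (\<sigma> v)\<close>. Double counting gives
  \<open>|V| r = |A| \<Sum>v. dim W v\<close>, so the feasible ratio \<open>d |A| / r\<close> equals
  \<open>d |V| / \<Sum>v. dim W v\<close>, which therefore bounds the complement of the projective rank.\<close>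

section \<open>Direct sums of finite-dimensional subspaces\<close>

context vector_space
begin

lemma independent_Un_if_span_Int_zero:
  assumes "independent B" "independent C" "span B \<inter> span C = {0}"
  shows "independent (B \<union> C)"
proof -
  have not_in_span: "a \<notin> span (B \<union> C - {a})"
    if "a \<in> B" "independent B" "span B \<inter> span C = {0}" for a B C
  proof
    assume "a \<in> span (B \<union> C - {a})"
    moreover have "a \<notin> C"
    proof
      assume "a \<in> C"
      then have "a \<in> span B \<inter> span C"
        using that(1) span_base by blast
      then have "a = 0"
        using that(3) by blast
      then show False
        using that(1,2) dependent_zero by blast
    qed
    then have "B \<union> C - {a} = (B - {a}) \<union> C"
      by blast
    ultimately have "a \<in> {x + y | x y. x \<in> span (B - {a}) \<and> y \<in> span C}"
      by (simp only: span_Un)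
    then obtain x y where xy: "a = x + y" "x \<in> span (B - {a})" "y \<in> span C"
      by (elim CollectE exE conjE) (rule that)
    have "x \<in> span B"
      using xy(2) span_mono[of "B - {a}" B] by blast
    then have "a - x \<in> span B"
      using span_diff[OF span_base[OF that(1)]] by blast
    then have "y \<in> span B \<inter> span C"
      using xy(1,3) by simp
    then have "y = 0"
      using that(3) by blast
    then have "a \<in> span (B - {a})"
      using xy(1,2) by simp
    then show False
      using that(1,2) unfolding dependent_def by blast
  qed
  have "a \<notin> span (B \<union> C - {a})" if "a \<in> B \<union> C" for a
  proof (cases "a \<in> B")
    case True
    then show ?thesis
      using not_in_span assms by blast
  next
    case False
    then show ?thesis
      using that not_in_span[of a C B] assms by (simp add: Un_commute Int_commute)
  qed
  then show ?thesis
    unfolding dependent_def by blast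
qed

text \<open>The finite spanning set \<open>A\<close> is essential: \<open>dim\<close> is the cardinality of a basis,
  which is \<open>0\<close> for an infinite one.\<close>

lemma dim_sums_Int_zero:
  assumes "subspace S" "subspace T" "S \<inter> T = {0}" "finite A" "S \<union> T \<subseteq> span A"
  shows "dim {x + y | x y. x \<in> S \<and> y \<in> T} = dim S + dim T"
proof -
  obtain B where B: "B \<subseteq> S" "independent B" "S \<subseteq> span B" "card B = dim S"
    using basis_exists by blast
  obtain C where C: "C \<subseteq> T" "independent C" "T \<subseteq> span C" "card C = dim T"
    using basis_exists by blast
  have spans: "span B = S" "span C = T"
    using B C assms(1,2) span_subspace by auto
  have "B \<subseteq> span A" "C \<subseteq> span A"
    using B(1) C(1) assms(5) by blast+
  then have "finite B" "finite C"
    using B(2) C(2) assms(4) independent_span_bound by blast+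
  moreover have "B \<inter> C = {}"
  proof -
    have "B \<inter> C \<subseteq> {0}"
      using B(1) C(1) assms(3) by blast
    moreover have "0 \<notin> B"
      using B(2) dependent_zero by blast
    ultimately show ?thesis
      by blast
  qed
  moreover have "independent (B \<union> C)"
    using B C assms(3) spans by (intro independent_Un_if_span_Int_zero) auto
  ultimately have "dim (span (B \<union> C)) = dim S + dim T"
    using B C by (simp add: dim_eq_card_independent card_Un_disjoint)
  then show ?thesis
    unfolding span_Un spans .
qed

lemma dim_image_inj:
  assumes "Vector_Spaces.linear scale scale f" "inj f"
  shows "dim (f ` S) = dim S"
proof -
  interpret f: Vector_Spaces.linear scale scale f by fact
  obtain B where B: "B \<subseteq> S" "independent B" "S \<subseteq> span B" "card B = dim S"
    using basis_exists by blast
  have "independent (f ` B)"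
    using B(2) assms(2) f.independent_injective_image by (metis inj_on_subset subset_UNIV)
  moreover have "f ` S \<subseteq> span (f ` B)"
    using B(3) f.span_image by blast
  ultimately have "card (f ` B) = dim (f ` S)"
    using B(1) by (intro basis_card_eq_dim) blast+
  then show ?thesis
    using B(4) assms(2) by (simp add: card_image inj_on_subset)
qed

end

section \<open>Block sums of representations in \<open>\<complex>^d\<close>\<close>

interpretation cv: vector_space cscale
  by unfold_locales (auto simp: cscale_def fun_eq_iff algebra_simps)

definition unit_vec :: "nat \<Rightarrow> nat \<Rightarrow> complex" where
  "unit_vec k = (\<lambda>j. if j = k then 1 else 0)"

lemma sum_apply: "sum f A i = (\<Sum>a\<in>A. f a i)"
  by (induction A rule: infinite_finite_induct) auto

lemma subspace_cvecs: "cv.subspace (cvecs m)"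
  unfolding cv.subspace_def by (auto simp: cvecs_def cscale_def)

lemma cvecs_subset_span_unit_vec: "cvecs m \<subseteq> cv.span (unit_vec ` {..<m})"
proof
  fix x assume x: "x \<in> cvecs m"
  have "x = (\<Sum>k<m. cscale (x k) (unit_vec k))"
  proof
    fix j
    have "(\<Sum>k<m. cscale (x k) (unit_vec k)) j = (\<Sum>k<m. if k = j then x j else 0)"
      unfolding sum_apply by (intro sum.cong) (auto simp: unit_vec_def cscale_def)
    also have "\<dots> = x j" using x by (auto simp: cvecs_def)
    finally show "x j = (\<Sum>k<m. cscale (x k) (unit_vec k)) j" by simp
  qed
  also have "\<dots> \<in> cv.span (unit_vec ` {..<m})"
    by (intro cv.span_sum cv.span_scale cv.span_base) auto
  finally show "x \<in> cv.span (unit_vec ` {..<m})" .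
qed

lemma cdim_le:
  assumes "csubspace_of m P"
  shows "cdim P \<le> m"
proof -
  have "cdim P \<le> card (unit_vec ` {..<m})"
    using assms cvecs_subset_span_unit_vec unfolding csubspace_of_def cdim_def
    by (intro cv.dim_le_card) auto
  also have "\<dots> \<le> m"
    using card_image_le[of "{..<m}" unit_vec] by simp
  finally show ?thesis .
qed

lemma cdim_span_unit_vec: "cdim (cv.span {unit_vec k}) = 1"
proof -
  have "unit_vec k \<noteq> 0"
    by (auto simp: unit_vec_def fun_eq_iff)
  then have "cv.independent {unit_vec k}"
    by (simp add: cv.independent_insert)
  then show ?thesis
    unfolding cdim_def by (simp add: cv.dim_eq_card_independent)
qed

lemma span_unit_vec_subset_cvecs: "k < m \<Longrightarrow> cv.span {unit_vec k} \<subseteq> cvecs m"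
  using subspace_cvecs by (intro cv.span_minimal) (auto simp: cvecs_def unit_vec_def)

lemma cdim_zero: "cdim {0} = 0"
  using cv.dim_span_eq_card_independent[OF cv.independent_empty]
  unfolding cdim_def by (metis cv.span_empty card.empty)

definition shift :: "nat \<Rightarrow> (nat \<Rightarrow> complex) \<Rightarrow> (nat \<Rightarrow> complex)" where
  "shift m q = (\<lambda>i. if i < m then 0 else q (i - m))"

lemma linear_shift: "Vector_Spaces.linear cscale cscale (shift m)"
  by unfold_locales (auto simp: shift_def cscale_def fun_eq_iff)

lemma inj_shift: "inj (shift m)"
proof
  fix p q assume "shift m p = shift m q"
  then have "shift m p (i + m) = shift m q (i + m)" for i by simp
  then show "p = q" by (auto simp: shift_def fun_eq_iff)
qed

lemma shift_cvecs: "q \<in> cvecs n \<Longrightarrow> shift m q \<in> cvecs (m + n)"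
  by (auto simp: cvecs_def shift_def)

definition block_sum ::
    "nat \<Rightarrow> (nat \<Rightarrow> complex) set \<Rightarrow> (nat \<Rightarrow> complex) set \<Rightarrow> (nat \<Rightarrow> complex) set" where
  "block_sum m P Q = {x + y | x y. x \<in> P \<and> y \<in> shift m ` Q}"

lemma csubspace_block_sum:
  assumes "csubspace_of m P" "csubspace_of n Q"
  shows "csubspace_of (m + n) (block_sum m P Q)"
proof -
  interpret sh: Vector_Spaces.linear cscale cscale "shift m" by (rule linear_shift)
  have P: "cv.subspace P" "P \<subseteq> cvecs m" and Q: "cv.subspace Q" "Q \<subseteq> cvecs n"
    using assms unfolding csubspace_of_def by blast+
  have "cv.subspace (block_sum m P Q)"
    unfolding block_sum_def by (intro cv.subspace_sums sh.subspace_image P(1) Q(1))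
  moreover have "block_sum m P Q \<subseteq> cvecs (m + n)"
  proof
    fix z assume "z \<in> block_sum m P Q"
    then obtain x q where "z = x + shift m q" "x \<in> cvecs m" "q \<in> cvecs n"
      using P(2) Q(2) unfolding block_sum_def by blast
    then show "z \<in> cvecs (m + n)"
      by (simp add: cvecs_def shift_def)
  qed
  ultimately show ?thesis
    unfolding csubspace_of_def by blast
qed

lemma cdim_block_sum:
  assumes "csubspace_of m P" "csubspace_of n Q"
  shows "cdim (block_sum m P Q) = cdim P + cdim Q"
proof -
  interpret sh: Vector_Spaces.linear cscale cscale "shift m" by (rule linear_shift)
  have "P \<subseteq> cvecs (m + n)" "shift m ` Q \<subseteq> cvecs (m + n)"
    using assms shift_cvecs unfolding csubspace_of_def by (auto simp: cvecs_def)
  moreover have "P \<inter> shift m ` Q = {0}"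
  proof -
    have "0 \<in> P" "0 \<in> shift m ` Q"
      using assms sh.subspace_image unfolding csubspace_of_def by (auto intro: cv.subspace_0)
    moreover have "x = 0" if "x \<in> P" "x \<in> shift m ` Q" for x
      using that assms(1) unfolding csubspace_of_def by (auto simp: cvecs_def shift_def fun_eq_iff)
    ultimately show ?thesis by blast
  qed
  ultimately have "cv.dim (block_sum m P Q) = cv.dim P + cv.dim (shift m ` Q)"
    using assms sh.subspace_image cvecs_subset_span_unit_vec[of "m + n"]
    unfolding block_sum_def csubspace_of_def
    by (intro cv.dim_sums_Int_zero[where A = "unit_vec ` {..<m + n}"]) auto
  then show ?thesis
    unfolding cdim_def cv.dim_image_inj[OF linear_shift inj_shift] .
qed

lemma cinner_block_sum:
  assumes "x \<in> cvecs m" "x' \<in> cvecs m"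
  shows "cinner (m + n) (x + shift m y) (x' + shift m y') = cinner m x x' + cinner n y y'"
proof -
  have "(\<Sum>i<m. (x + shift m y) i * cnj ((x' + shift m y') i)) = cinner m x x'"
    unfolding cinner_def by (intro sum.cong) (auto simp: shift_def)
  moreover have "(\<Sum>i<n. (x + shift m y) (m + i) * cnj ((x' + shift m y') (m + i))) = cinner n y y'"
    unfolding cinner_def using assms by (intro sum.cong) (auto simp: shift_def cvecs_def)
  moreover have "(\<Sum>i<m + n. g i) = (\<Sum>i<m. g i) + (\<Sum>i<n. g (m + i))" for g :: "nat \<Rightarrow> complex"
    by (induction n) (simp_all add: ac_simps)
  ultimately show ?thesis
    unfolding cinner_def[of "m + n"] by simp
qed

lemma orth_block_sum:
  assumes "P \<subseteq> cvecs m" "P' \<subseteq> cvecs m" "orth_subspaces m P P'" "orth_subspaces n Q Q'"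
  shows "orth_subspaces (m + n) (block_sum m P Q) (block_sum m P' Q')"
  unfolding orth_subspaces_def
proof (intro ballI)
  fix z z' assume "z \<in> block_sum m P Q" "z' \<in> block_sum m P' Q'"
  then obtain x y x' y' where z: "z = x + shift m y" "x \<in> P" "y \<in> Q"
    and z': "z' = x' + shift m y'" "x' \<in> P'" "y' \<in> Q'"
    unfolding block_sum_def by blast
  have "cinner (m + n) z z' = cinner m x x' + cinner n y y'"
    unfolding z(1) z'(1) using z z' assms by (intro cinner_block_sum) auto
  also have "\<dots> = 0"
    using assms z z' unfolding orth_subspaces_def by simp
  finally show "cinner (m + n) z z' = 0" .
qed

fun rep_block_sum ::
    "nat \<Rightarrow> ('a \<Rightarrow> (nat \<Rightarrow> complex) set) list \<Rightarrow> 'a \<Rightarrow> (nat \<Rightarrow> complex) set" where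
  "rep_block_sum d [] u = {0}"
| "rep_block_sum d (F # Fs) u = block_sum d (F u) (rep_block_sum d Fs u)"

lemma compl_orth_rep_rep_block_sum:
  assumes "\<forall>F\<in>set Fs. compl_orth_rep V E d F"
  shows "compl_orth_rep V E (d * length Fs) (rep_block_sum d Fs)"
  using assms
proof (induction Fs)
  case Nil
  show ?case
    by (simp add: compl_orth_rep_def csubspace_of_def cvecs_def orth_subspaces_def cinner_def)
next
  case (Cons F Fs)
  then have F: "compl_orth_rep V E d F"
    and IH: "compl_orth_rep V E (d * length Fs) (rep_block_sum d Fs)"
    by simp_all
  have "csubspace_of (d + d * length Fs) (rep_block_sum d (F # Fs) u)" if "u \<in> V" for u
    using F IH that csubspace_block_sum unfolding compl_orth_rep_def by simp
  moreover have
    "orth_subspaces (d + d * length Fs) (rep_block_sum d (F # Fs) u) (rep_block_sum d (F # Fs) v)"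
    if "u \<in> V" "v \<in> V" "u \<noteq> v" "\<not> E u v" for u v
  proof -
    have "F u \<subseteq> cvecs d" "F v \<subseteq> cvecs d" "orth_subspaces d (F u) (F v)"
      "orth_subspaces (d * length Fs) (rep_block_sum d Fs u) (rep_block_sum d Fs v)"
      using F IH that unfolding compl_orth_rep_def csubspace_of_def by blast+
    then show ?thesis
      unfolding rep_block_sum.simps by (rule orth_block_sum)
  qed
  ultimately show ?case
    unfolding compl_orth_rep_def by simp
qed

lemma cdim_rep_block_sum:
  assumes "\<forall>F\<in>set Fs. compl_orth_rep V E d F" "u \<in> V"
  shows "cdim (rep_block_sum d Fs u) = (\<Sum>F\<leftarrow>Fs. cdim (F u))"
  using assms(1)
proof (induction Fs)
  case Nil
  then show ?case
    by (simp add: cdim_zero)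
next
  case (Cons F Fs)
  then have "compl_orth_rep V E d F" "compl_orth_rep V E (d * length Fs) (rep_block_sum d Fs)"
    using compl_orth_rep_rep_block_sum[of Fs] by simp_all
  then have "csubspace_of d (F u)" "csubspace_of (d * length Fs) (rep_block_sum d Fs u)"
    using assms(2) unfolding compl_orth_rep_def by blast+
  then show ?case
    using Cons by (simp add: cdim_block_sum)
qed

section \<open>Graph automorphisms\<close>

text \<open>Automorphisms are normalized to the identity outside \<open>V\<close>, so that they form a finite
  set closed under composition.\<close>

definition automorphisms :: "'a set \<Rightarrow> ('a \<Rightarrow> 'a \<Rightarrow> bool) \<Rightarrow> ('a \<Rightarrow> 'a) set" where
  "automorphisms V E = {\<sigma>. graph_automorphism V E \<sigma> \<and> (\<forall>x. x \<notin> V \<longrightarrow> \<sigma> x = x)}"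

lemma automorphisms_bij_betw: "\<sigma> \<in> automorphisms V E \<Longrightarrow> bij_betw \<sigma> V V"
  unfolding automorphisms_def graph_automorphism_def by blast

lemma automorphisms_in: "\<sigma> \<in> automorphisms V E \<Longrightarrow> u \<in> V \<Longrightarrow> \<sigma> u \<in> V"
  using automorphisms_bij_betw bij_betwE by blast

lemma automorphisms_adj:
  "\<sigma> \<in> automorphisms V E \<Longrightarrow> u \<in> V \<Longrightarrow> v \<in> V \<Longrightarrow> E (\<sigma> u) (\<sigma> v) \<longleftrightarrow> E u v"
  unfolding automorphisms_def graph_automorphism_def by blast

lemma automorphisms_outside: "\<sigma> \<in> automorphisms V E \<Longrightarrow> x \<notin> V \<Longrightarrow> \<sigma> x = x"
  unfolding automorphisms_def by blast

lemma id_in_automorphisms: "id \<in> automorphisms V E"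
  unfolding automorphisms_def graph_automorphism_def by simp

lemma automorphisms_comp:
  assumes "\<sigma> \<in> automorphisms V E" "\<tau> \<in> automorphisms V E"
  shows "\<sigma> \<circ> \<tau> \<in> automorphisms V E"
proof -
  have "bij_betw (\<sigma> \<circ> \<tau>) V V"
    using assms automorphisms_bij_betw bij_betw_trans by blast
  moreover have "E (\<sigma> (\<tau> u)) (\<sigma> (\<tau> v)) \<longleftrightarrow> E u v" if "u \<in> V" "v \<in> V" for u v
    using assms that by (simp add: automorphisms_adj automorphisms_in)
  moreover have "\<sigma> (\<tau> x) = x" if "x \<notin> V" for x
    using assms that by (simp add: automorphisms_outside)
  ultimately show ?thesis
    unfolding automorphisms_def graph_automorphism_def by simp
qed

lemma finite_automorphisms:
  assumes "finite V"
  shows "finite (automorphisms V E)"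
proof -
  have "inj_on (\<lambda>\<sigma>. restrict \<sigma> V) (automorphisms V E)"
  proof (rule inj_onI, rule ext)
    fix \<sigma> \<tau> x
    assume "\<sigma> \<in> automorphisms V E" "\<tau> \<in> automorphisms V E" "restrict \<sigma> V = restrict \<tau> V"
    then show "\<sigma> x = \<tau> x"
      by (cases "x \<in> V") (auto simp: automorphisms_outside dest: fun_cong[of _ _ x])
  qed
  moreover have "(\<lambda>\<sigma>. restrict \<sigma> V) ` automorphisms V E \<subseteq> V \<rightarrow>\<^sub>E V"
    by (auto simp: restrict_PiE_iff automorphisms_in)
  ultimately show ?thesis
    by (rule inj_on_finite) (simp add: assms finite_PiE)
qed

lemma automorphism_mapping:
  assumes "vertex_transitive V E" "u \<in> V" "v \<in> V"
  obtains \<tau> where "\<tau> \<in> automorphisms V E" "\<tau> u = v"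
proof -
  obtain \<sigma> where \<sigma>: "graph_automorphism V E \<sigma>" "\<sigma> u = v"
    using assms unfolding vertex_transitive_def by blast
  define \<tau> where "\<tau> x = (if x \<in> V then \<sigma> x else x)" for x
  have "bij_betw \<tau> V V \<longleftrightarrow> bij_betw \<sigma> V V"
    by (rule bij_betw_cong) (simp add: \<tau>_def)
  then have "\<tau> \<in> automorphisms V E"
    using \<sigma>(1) unfolding automorphisms_def graph_automorphism_def by (simp add: \<tau>_def)
  moreover have "\<tau> u = v"
    using \<sigma>(2) assms(2) by (simp add: \<tau>_def)
  ultimately show ?thesis
    using that by blast
qed

lemma bij_betw_comp_right_automorphism:
  assumes "finite V" "\<tau> \<in> automorphisms V E"
  shows "bij_betw (\<lambda>\<sigma>. \<sigma> \<circ> \<tau>) (automorphisms V E) (automorphisms V E)"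
proof -
  have "inj_on (\<lambda>\<sigma>. \<sigma> \<circ> \<tau>) (automorphisms V E)"
  proof (rule inj_onI, rule ext)
    fix \<sigma>1 \<sigma>2 x
    assume \<sigma>: "\<sigma>1 \<in> automorphisms V E" "\<sigma>2 \<in> automorphisms V E" "\<sigma>1 \<circ> \<tau> = \<sigma>2 \<circ> \<tau>"
    show "\<sigma>1 x = \<sigma>2 x"
    proof (cases "x \<in> V")
      case True
      then obtain y where "x = \<tau> y"
        using automorphisms_bij_betw[OF assms(2)] bij_betw_imp_surj_on by blast
      then show ?thesis
        using \<sigma>(3) by (metis comp_apply)
    next
      case False
      then show ?thesis
        using \<sigma>(1,2) by (simp add: automorphisms_outside)
    qed
  qed
  moreover have "(\<lambda>\<sigma>. \<sigma> \<circ> \<tau>) ` automorphisms V E \<subseteq> automorphisms V E"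
    using automorphisms_comp[OF _ assms(2)] by blast
  ultimately show ?thesis
    using endo_inj_surj[OF finite_automorphisms[OF assms(1)]] unfolding bij_betw_def by blast
qed

lemma sum_automorphisms_orbit_eq:
  assumes "finite V" "vertex_transitive V E" "u \<in> V" "v \<in> V"
  shows "(\<Sum>\<sigma>\<in>automorphisms V E. f (\<sigma> v)) = (\<Sum>\<sigma>\<in>automorphisms V E. f (\<sigma> u))"
proof -
  obtain \<tau> where \<tau>: "\<tau> \<in> automorphisms V E" "\<tau> u = v"
    by (rule automorphism_mapping[OF assms(2,3,4)])
  have "(\<Sum>\<sigma>\<in>automorphisms V E. f (\<sigma> v)) = (\<Sum>\<sigma>\<in>automorphisms V E. f ((\<sigma> \<circ> \<tau>) u))"
    using \<tau>(2) by simp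
  also have "\<dots> = (\<Sum>\<sigma>\<in>automorphisms V E. f (\<sigma> u))"
    by (rule sum.reindex_bij_betw[OF bij_betw_comp_right_automorphism[OF assms(1) \<tau>(1)]])
  finally show ?thesis .
qed

lemma card_mult_sum_automorphisms_orbit:
  fixes f :: "'a \<Rightarrow> nat"
  assumes "finite V" "vertex_transitive V E" "u \<in> V"
  shows "card V * (\<Sum>\<sigma>\<in>automorphisms V E. f (\<sigma> u)) = card (automorphisms V E) * (\<Sum>v\<in>V. f v)"
proof -
  let ?A = "automorphisms V E"
  have "(\<Sum>v\<in>V. \<Sum>\<sigma>\<in>?A. f (\<sigma> v)) = (\<Sum>v\<in>V. \<Sum>\<sigma>\<in>?A. f (\<sigma> u))"
    using sum_automorphisms_orbit_eq[OF assms] by (rule sum.cong[OF refl])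
  then have "card V * (\<Sum>\<sigma>\<in>?A. f (\<sigma> u)) = (\<Sum>v\<in>V. \<Sum>\<sigma>\<in>?A. f (\<sigma> v))"
    by simp
  also have "\<dots> = (\<Sum>\<sigma>\<in>?A. \<Sum>v\<in>V. f (\<sigma> v))"
    by (rule sum.swap)
  also have "\<dots> = (\<Sum>\<sigma>\<in>?A. \<Sum>v\<in>V. f v)"
  proof (rule sum.cong[OF refl])
    fix \<sigma> assume "\<sigma> \<in> ?A"
    then show "(\<Sum>v\<in>V. f (\<sigma> v)) = (\<Sum>v\<in>V. f v)"
      by (rule sum.reindex_bij_betw[OF automorphisms_bij_betw])
  qed
  finally show ?thesis
    by simp
qed

lemma compl_orth_rep_comp:
  assumes "compl_orth_rep V E d W" "graph_automorphism V E \<sigma>"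
  shows "compl_orth_rep V E d (W \<circ> \<sigma>)"
proof -
  have bij: "bij_betw \<sigma> V V" and E: "\<forall>u\<in>V. \<forall>v\<in>V. E (\<sigma> u) (\<sigma> v) \<longleftrightarrow> E u v"
    using assms(2) unfolding graph_automorphism_def by blast+
  have "\<sigma> u \<in> V" if "u \<in> V" for u
    using bij that bij_betwE by blast
  moreover have "\<sigma> u \<noteq> \<sigma> v" if "u \<in> V" "v \<in> V" "u \<noteq> v" for u v
    using bij that unfolding bij_betw_def inj_on_def by blast
  ultimately show ?thesis
    using assms(1) E unfolding compl_orth_rep_def by simp
qed

section \<open>Symmetrization\<close>

definition proj_rank_ratios :: "'a set \<Rightarrow> ('a \<Rightarrow> 'a \<Rightarrow> bool) \<Rightarrow> real set" where
  "proj_rank_ratios V E = {real d / real r | d r. d \<ge> 1 \<and> r \<ge> 1 \<and>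
      (\<exists>W. compl_orth_rep V E d W \<and> (\<forall>v\<in>V. cdim (W v) = r))}"

lemma compl_proj_rank_eq_Inf: "compl_proj_rank V E = Inf (proj_rank_ratios V E)"
  unfolding compl_proj_rank_def proj_rank_ratios_def ..

lemma symmetrized_compl_orth_rep:
  assumes "finite V" "compl_orth_rep V E d W"
  obtains W' where "compl_orth_rep V E (d * card (automorphisms V E)) W'"
    and "\<And>v. v \<in> V \<Longrightarrow> cdim (W' v) = (\<Sum>\<sigma>\<in>automorphisms V E. cdim (W (\<sigma> v)))"
proof -
  obtain \<sigma>s where \<sigma>s: "distinct \<sigma>s" "set \<sigma>s = automorphisms V E"
    using finite_distinct_list[OF finite_automorphisms[OF assms(1)]] by blast
  define Fs where "Fs = map (\<lambda>\<sigma>. W \<circ> \<sigma>) \<sigma>s"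
  have Fs: "\<forall>F\<in>set Fs. compl_orth_rep V E d F"
    using assms(2) compl_orth_rep_comp \<sigma>s(2) unfolding Fs_def automorphisms_def by auto
  have "length Fs = card (automorphisms V E)"
    using \<sigma>s distinct_card unfolding Fs_def by fastforce
  moreover have "cdim (rep_block_sum d Fs v) = (\<Sum>\<sigma>\<in>automorphisms V E. cdim (W (\<sigma> v)))"
    if "v \<in> V" for v
    using cdim_rep_block_sum[OF Fs that] \<sigma>s
    by (simp add: Fs_def comp_def sum_list_distinct_conv_sum_set)
  ultimately show ?thesis
    using that compl_orth_rep_rep_block_sum[OF Fs] by simp
qed

lemma symmetrized_ratio_in_proj_rank_ratios:
  assumes "finite V" "vertex_transitive V E" "compl_orth_rep V E d W"
    and "(\<Sum>v\<in>V. cdim (W v)) > 0"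
  shows "real d * real (card V) / (\<Sum>v\<in>V. real (cdim (W v))) \<in> proj_rank_ratios V E"
proof -
  define A where "A = automorphisms V E"
  define S where "S = (\<Sum>v\<in>V. cdim (W v))"
  obtain v0 where v0: "v0 \<in> V" "cdim (W v0) > 0"
    using assms(4) by (metis gr0I sum.neutral less_irrefl)
  define r where "r = (\<Sum>\<sigma>\<in>A. cdim (W (\<sigma> v0)))"
  obtain W' where W': "compl_orth_rep V E (d * card A) W'"
    and cdim_W': "\<And>v. v \<in> V \<Longrightarrow> cdim (W' v) = (\<Sum>\<sigma>\<in>A. cdim (W (\<sigma> v)))"
    using symmetrized_compl_orth_rep[OF assms(1,3)] unfolding A_def by blast
  have dims: "\<forall>v\<in>V. cdim (W' v) = r"
    using cdim_W' sum_automorphisms_orbit_eq[OF assms(1,2) v0(1), of _ "\<lambda>x. cdim (W x)"]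
    unfolding r_def A_def by simp
  have count: "card V * r = card A * S"
    unfolding r_def A_def S_def by (rule card_mult_sum_automorphisms_orbit[OF assms(1,2) v0(1)])
  have "card A > 0"
    using finite_automorphisms[OF assms(1)] id_in_automorphisms unfolding A_def
    by (metis card_gt_0_iff empty_iff)
  then have "r > 0"
    using count assms(4) unfolding S_def by (metis mult_is_0 not_gr_zero)
  have "d > 0"
    using v0 cdim_le[of d "W v0"] assms(3) unfolding compl_orth_rep_def by auto
  have "real (d * card A) / real r \<in> proj_rank_ratios V E"
    using W' dims \<open>d > 0\<close> \<open>card A > 0\<close> \<open>r > 0\<close>
    unfolding proj_rank_ratios_def by fastforce
  moreover have "real (d * card A) / real r = real d * real (card V) / real S"
  proof -
    have "real (card V) * real r = real (card A) * real S"
      using count by (metis of_nat_mult)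
    moreover have "S > 0"
      using assms(4) unfolding S_def .
    ultimately show ?thesis
      using \<open>r > 0\<close> by (simp add: field_simps)
  qed
  ultimately show ?thesis
    unfolding S_def by simp
qed

lemma one_le_proj_rank_ratio:
  assumes "V \<noteq> {}" "x \<in> proj_rank_ratios V E"
  shows "1 \<le> x"
proof -
  obtain d r W where x: "x = real d / real r" "r \<ge> 1" "compl_orth_rep V E d W"
    and dims: "\<forall>v\<in>V. cdim (W v) = r"
    using assms(2) unfolding proj_rank_ratios_def by blast
  obtain v where "v \<in> V"
    using assms(1) by blast
  then have "r \<le> d"
    using x(3) dims cdim_le unfolding compl_orth_rep_def by metis
  then show ?thesis
    using x(1,2) by simp
qed

lemma orth_subspaces_zero: "orth_subspaces d {0} W" "orth_subspaces d W {0}"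
  by (simp_all add: orth_subspaces_def cinner_def)

text \<open>Needed because \<open>Inf {}\<close> is unspecified on \<open>real\<close>; the witness is the symmetrization
  of the representation with a line at one vertex and \<open>{0}\<close> elsewhere.\<close>

lemma proj_rank_ratios_nonempty:
  assumes "finite V" "V \<noteq> {}" "vertex_transitive V E"
  shows "proj_rank_ratios V E \<noteq> {}"
proof -
  obtain v0 where v0: "v0 \<in> V"
    using assms(2) by blast
  define W where "W u = (if u = v0 then cv.span {unit_vec 0} else {0})" for u
  have "csubspace_of 1 (cv.span {unit_vec 0})" "csubspace_of 1 {0}"
    using span_unit_vec_subset_cvecs[of 0 1]
    by (auto simp: csubspace_of_def cvecs_def cv.subspace_span)
  then have "compl_orth_rep V E 1 W"
    unfolding compl_orth_rep_def W_def by (simp add: orth_subspaces_zero)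
  moreover have "(\<Sum>v\<in>V. cdim (W v)) = 1"
  proof -
    have "cdim (W v) = (if v = v0 then 1 else 0)" for v
      by (simp add: W_def cdim_span_unit_vec cdim_zero)
    then show ?thesis
      using assms(1) v0 by simp
  qed
  ultimately show ?thesis
    using symmetrized_ratio_in_proj_rank_ratios[OF assms(1,3)] by fastforce
qed

lemma one_le_compl_proj_rank:
  assumes "finite V" "V \<noteq> {}" "vertex_transitive V E"
  shows "1 \<le> compl_proj_rank V E"
  unfolding compl_proj_rank_eq_Inf
  using proj_rank_ratios_nonempty[OF assms] one_le_proj_rank_ratio[OF assms(2)]
  by (intro cInf_greatest) auto

lemma compl_proj_rank_le:
  assumes "finite V" "vertex_transitive V E" "compl_orth_rep V E d W"
    and "(\<Sum>v\<in>V. cdim (W v)) > 0"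
  shows "compl_proj_rank V E \<le> real d * real (card V) / (\<Sum>v\<in>V. real (cdim (W v)))"
proof -
  have "bdd_below (proj_rank_ratios V E)"
    unfolding proj_rank_ratios_def by (intro bdd_belowI[of _ 0]) auto
  then show ?thesis
    unfolding compl_proj_rank_eq_Inf
    using symmetrized_ratio_in_proj_rank_ratios[OF assms] by (rule cInf_lower[rotated])
qed

theorem corollary15:
  fixes V :: "'a set" and E :: "'a \<Rightarrow> 'a \<Rightarrow> bool"
    and d :: nat and W :: "'a \<Rightarrow> (nat \<Rightarrow> complex) set"
  assumes "simple_graph V E"
    and "vertex_transitive V E"
    and "compl_orth_rep V E d W"
  shows "(\<Sum>v\<in>V. real (cdim (W v))) \<le> real d * real (card V) / compl_proj_rank V E"
proof -
  have "finite V"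
    using assms(1) unfolding simple_graph_def by blast
  show ?thesis
  proof (cases "V = {}")
    case True
    then show ?thesis
      by simp
  next
    case False
    then have rank: "1 \<le> compl_proj_rank V E"
      using one_le_compl_proj_rank \<open>finite V\<close> assms(2) by blast
    show ?thesis
    proof (cases "(\<Sum>v\<in>V. cdim (W v)) = 0")
      case True
      then show ?thesis
        using rank by (simp add: of_nat_sum[symmetric] del: of_nat_sum)
    next
      case False
      then have "compl_proj_rank V E \<le> real d * real (card V) / (\<Sum>v\<in>V. real (cdim (W v)))"
        using compl_proj_rank_le[OF \<open>finite V\<close> assms(2,3)] by simp
      moreover have "(\<Sum>v\<in>V. real (cdim (W v))) > 0"
        using False by (simp add: of_nat_sum[symmetric] del: of_nat_sum)
      ultimately show ?thesis
        using rank by (simp add: le_divide_eq mult.commute)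
    qed
  qed
qed

end
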